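(* For all $k\in\mathbb N_+$ and $T\ge0$, writing $q_c=\lfloor k/c\rfloor$ for $c\in\mathbb N_+$, $$v(k,T)\le\min_{c\in\mathbb N_+}\Big\{\big(q_cF(c)+F(k-c\,q_c)\big)\mathbb P(N(T)\ge q_c)+\sum_{n=0}^{q_c-1}\big(nF(c)+F(k-nc)\big)\mathbb P(N(T)=n)\Big\}.$$
   Context: Let $\lambda>0$ and let $N$ be a Poisson process with intensity $\lambda$, arrival times $0<\sigma_1<\sigma_2<\cdots$, and natural filtration $\mathcal F_t=\sigma(N_s:s\le t)$. Let $F:[0,\infty)\to[0,\infty)$ be strictly increasing and strictly convex with $F(0)=0$. For $k\in\{0,1,\dots\}$ let $\mathcal A_k$ be the set of $(\mathcal F_t)$-adapted, integer-valued, nonnegative, non-increasing processes $\xi$ with $\xi_0=k$ whose values change only at arrival times of $N$, and $v(k,T)=\inf_{\xi\in\mathcal A_k}\mathbb E[\sum_{i:\sigma_i\le T}F(\xi_{\sigma_i-}-\xi_{\sigma_i})+F(\xi_T)]$. $\lfloor\cdot\rfloor$ is the floor function. *)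

theory Defs
  imports "HOL-Probability.Probability"
begin

definition strictly_convex_on :: "real set \<Rightarrow> (real \<Rightarrow> real) \<Rightarrow> bool" where
  "strictly_convex_on S F \<longleftrightarrow>
     (\<forall>x\<in>S. \<forall>y\<in>S. x \<noteq> y \<longrightarrow> (\<forall>u::real. 0 < u \<and> u < 1 \<longrightarrow>
        F (u * x + (1 - u) * y) < u * F x + (1 - u) * F y))"

definition poisson_process :: "'a measure \<Rightarrow> real \<Rightarrow> (real \<Rightarrow> 'a \<Rightarrow> nat) \<Rightarrow> bool" where
  "poisson_process M lam N \<longleftrightarrow>
     prob_space M \<and>
     (\<forall>t\<ge>0. N t \<in> measurable M (count_space UNIV)) \<and>
     (\<forall>\<omega>\<in>space M.
        N 0 \<omega> = 0 \<and>
        (\<forall>s t. 0 \<le> s \<and> s \<le> t \<longrightarrow> N s \<omega> \<le> N t \<omega>) \<and>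
        (\<forall>t\<ge>0. \<exists>d>0. \<forall>s. t \<le> s \<and> s < t + d \<longrightarrow> N s \<omega> = N t \<omega>) \<and>
        (\<forall>t>0. \<exists>d>0. \<forall>s. t - d < s \<and> s < t \<longrightarrow> N t \<omega> \<le> N s \<omega> + 1)) \<and>
     (\<forall>ts::real list. sorted ts \<and> (\<forall>t\<in>set ts. 0 \<le> t) \<longrightarrow>
        prob_space.indep_vars M (\<lambda>_. count_space UNIV)
          (\<lambda>i \<omega>. N (ts ! Suc i) \<omega> - N (ts ! i) \<omega>) {..<length ts - 1}) \<and>
     (\<forall>s t n. 0 \<le> s \<and> s \<le> t \<longrightarrow>
        measure M {\<omega>\<in>space M. N t \<omega> - N s \<omega> = n}
          = exp (- lam * (t - s)) * (lam * (t - s)) ^ n / fact n)"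

definition natural_filtration :: "'a measure \<Rightarrow> (real \<Rightarrow> 'a \<Rightarrow> nat) \<Rightarrow> real \<Rightarrow> 'a measure" where
  "natural_filtration M N t =
     sigma (space M) {N s -` A \<inter> space M | s A. 0 \<le> s \<and> s \<le> t}"

definition arrival_time :: "(real \<Rightarrow> 'a \<Rightarrow> nat) \<Rightarrow> nat \<Rightarrow> 'a \<Rightarrow> real" where
  "arrival_time N i \<omega> = Inf {t. 0 \<le> t \<and> i \<le> N t \<omega>}"

definition left_lim :: "(real \<Rightarrow> nat) \<Rightarrow> real \<Rightarrow> real" where
  "left_lim f t = Lim (at_left t) (\<lambda>s. real (f s))"

definition admissible :: "'a measure \<Rightarrow> (real \<Rightarrow> 'a \<Rightarrow> nat) \<Rightarrow> nat \<Rightarrow> (real \<Rightarrow> 'a \<Rightarrow> nat) set" where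
  "admissible M N k = {\<xi>.
     (\<forall>t\<ge>0. \<xi> t \<in> measurable (natural_filtration M N t) (count_space UNIV)) \<and>
     (\<forall>\<omega>\<in>space M.
        \<xi> 0 \<omega> = k \<and>
        (\<forall>s t. 0 \<le> s \<and> s \<le> t \<longrightarrow> \<xi> t \<omega> \<le> \<xi> s \<omega>) \<and>
        (\<forall>s t. 0 \<le> s \<and> s \<le> t \<and> N s \<omega> = N t \<omega> \<longrightarrow> \<xi> s \<omega> = \<xi> t \<omega>))}"

definition cost :: "(real \<Rightarrow> real) \<Rightarrow> (real \<Rightarrow> 'a \<Rightarrow> nat) \<Rightarrow> (real \<Rightarrow> 'a \<Rightarrow> nat) \<Rightarrow> real \<Rightarrow> 'a \<Rightarrow> real" where
  "cost F N \<xi> T \<omega> =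
     (\<Sum>i\<in>{i. 1 \<le> i \<and> arrival_time N i \<omega> \<le> T}.
        F (left_lim (\<lambda>t. \<xi> t \<omega>) (arrival_time N i \<omega>) - real (\<xi> (arrival_time N i \<omega>) \<omega>)))
     + F (real (\<xi> T \<omega>))"

definition value_fn :: "'a measure \<Rightarrow> (real \<Rightarrow> real) \<Rightarrow> (real \<Rightarrow> 'a \<Rightarrow> nat) \<Rightarrow> nat \<Rightarrow> real \<Rightarrow> ennreal" where
  "value_fn M F N k T = (INF \<xi>\<in>admissible M N k. \<integral>\<^sup>+ \<omega>. ennreal (cost F N \<xi> T \<omega>) \<partial>M)"

end

theory Submission imports Defs begin

text \<open>An upper bound on \<open>v(k,T)\<close> only needs one admissible strategy: with \<open>q = \<lfloor>k/c\<rfloor>\<close>,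
  sell \<open>c\<close> units at each of the first \<open>q\<close> arrivals and the remainder at \<open>T\<close>, i.e.
  \<open>\<xi>\<^sub>t = k - c min(N\<^sub>t, q)\<close>. Because the Poisson paths are counting paths with unit
  jumps, the \<open>i\<close>-th arrival is the instant where the path passes from \<open>i - 1\<close> to \<open>i\<close>, so the
  cost of this strategy is \<open>min(N\<^sub>T, q) F(c) + F(k - c min(N\<^sub>T, q))\<close>, a function of \<open>N\<^sub>T\<close>
  whose expectation is the right-hand side.\<close>

definition counting_path :: "(real \<Rightarrow> nat) \<Rightarrow> bool" where
  "counting_path f \<longleftrightarrow>
     f 0 = 0 \<and>
     (\<forall>s t. 0 \<le> s \<and> s \<le> t \<longrightarrow> f s \<le> f t) \<and>
     (\<forall>t\<ge>0. \<exists>d>0. \<forall>s. t \<le> s \<and> s < t + d \<longrightarrow> f s = f t) \<and>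
     (\<forall>t>0. \<exists>d>0. \<forall>s. t - d < s \<and> s < t \<longrightarrow> f t \<le> f s + 1)"

definition first_passage :: "(real \<Rightarrow> nat) \<Rightarrow> nat \<Rightarrow> real" where
  "first_passage f i = Inf {t. 0 \<le> t \<and> i \<le> f t}"

lemma poisson_process_counting_path:
  assumes "poisson_process M lam N" "\<omega> \<in> space M"
  shows "counting_path (\<lambda>t. N t \<omega>)"
  using assms unfolding poisson_process_def counting_path_def by blast

lemma arrival_time_eq_first_passage:
  "arrival_time N i \<omega> = first_passage (\<lambda>t. N t \<omega>) i"
  by (simp add: arrival_time_def first_passage_def)

lemma first_passage_le:
  assumes "0 \<le> t" "i \<le> f t"
  shows "first_passage f i \<le> t"
  unfolding first_passage_def by (rule cInf_lower) (use assms in \<open>auto intro: bdd_belowI[of _ 0]\<close>)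

lemma counting_pathD:
  assumes "counting_path f"
  shows "f 0 = 0" "0 \<le> s \<Longrightarrow> s \<le> t \<Longrightarrow> f s \<le> f t"
    "0 \<le> t \<Longrightarrow> \<exists>d>0. \<forall>s. t \<le> s \<and> s < t + d \<longrightarrow> f s = f t"
    "0 < t \<Longrightarrow> \<exists>d>0. \<forall>s. t - d < s \<and> s < t \<longrightarrow> f t \<le> f s + 1"
  using assms unfolding counting_path_def by blast+

lemma counting_path_first_passage:
  assumes f: "counting_path f" and reach: "0 \<le> t\<^sub>0" "i \<le> f t\<^sub>0" and i: "1 \<le> i"
  shows "0 < first_passage f i" "f (first_passage f i) = i"
    "eventually (\<lambda>s. f s = i - 1) (at_left (first_passage f i))"
proof -
  define A where "A = {t. 0 \<le> t \<and> i \<le> f t}"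
  define \<sigma> where "\<sigma> = first_passage f i"
  have \<sigma>: "\<sigma> = Inf A" unfolding \<sigma>_def A_def first_passage_def ..
  have A_ne: "A \<noteq> {}" using reach unfolding A_def by blast
  have A_bdd: "bdd_below A" unfolding A_def by (rule bdd_belowI[of _ 0]) auto
  have below: "f s < i" if "0 \<le> s" "s < \<sigma>" for s
    using that first_passage_le[of s i f] unfolding \<sigma>_def by fastforce
  obtain d0 where d0: "d0 > 0" "\<And>s. 0 \<le> s \<Longrightarrow> s < d0 \<Longrightarrow> f s = 0"
    using counting_pathD(3)[OF f order_refl] counting_pathD(1)[OF f] by auto
  have "d0 \<le> \<sigma>"
    unfolding \<sigma>
  proof (rule cInf_greatest[OF A_ne])
    fix t assume "t \<in> A"
    then show "d0 \<le> t" using d0(2)[of t] i unfolding A_def by fastforce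
  qed
  then show pos: "0 < first_passage f i" using d0 unfolding \<sigma>_def by simp
  obtain d1 where d1: "d1 > 0" "\<forall>s. \<sigma> \<le> s \<and> s < \<sigma> + d1 \<longrightarrow> f s = f \<sigma>"
    using counting_pathD(3)[OF f, of \<sigma>] pos unfolding \<sigma>_def by auto
  obtain a where a: "a \<in> A" "a < \<sigma> + d1"
    using cInf_less_iff[OF A_ne A_bdd, of "\<sigma> + d1"] d1(1) \<sigma> by auto
  have "\<sigma> \<le> a" unfolding \<sigma> using a(1) A_bdd by (rule cInf_lower)
  then have "f a = f \<sigma>" using d1(2) a(2) by blast
  then have reached: "i \<le> f \<sigma>" using a(1) unfolding A_def by simp
  obtain d2 where d2: "d2 > 0" "\<forall>s. \<sigma> - d2 < s \<and> s < \<sigma> \<longrightarrow> f \<sigma> \<le> f s + 1"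
    using counting_pathD(4)[OF f, of \<sigma>] pos unfolding \<sigma>_def by auto
  define e where "e = min d2 \<sigma>"
  have e: "e > 0" using d2 pos unfolding e_def \<sigma>_def by simp
  have just_before: "f s = i - 1 \<and> f \<sigma> = i" if "\<sigma> - e < s" "s < \<sigma>" for s
  proof -
    have "0 \<le> s" "\<sigma> - d2 < s" using that unfolding e_def by auto
    then have "f s < i" "f \<sigma> \<le> f s + 1" using below d2(2) that by auto
    then show ?thesis using reached by linarith
  qed
  show "f (first_passage f i) = i" using just_before[of "\<sigma> - e/2"] e unfolding \<sigma>_def by simp
  have "eventually (\<lambda>s. s \<in> {\<sigma> - e<..<\<sigma>}) (at_left \<sigma>)"
    by (rule eventually_at_left_real) (use e in simp)
  then show "eventually (\<lambda>s. f s = i - 1) (at_left (first_passage f i))"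
    unfolding \<sigma>_def[symmetric] by (rule eventually_mono) (use just_before in auto)
qed

lemma left_lim_first_passage:
  assumes "counting_path f" "0 \<le> t\<^sub>0" "i \<le> f t\<^sub>0" "1 \<le> i"
  shows "left_lim (\<lambda>t. g (f t)) (first_passage f i) = real (g (i - 1))"
proof -
  have "eventually (\<lambda>s. real (g (f s)) = real (g (i - 1))) (at_left (first_passage f i))"
    using counting_path_first_passage(3)[OF assms] by (rule eventually_mono) simp
  then show ?thesis
    unfolding left_lim_def by (intro tendsto_Lim) (simp_all add: tendsto_eventually)
qed

text \<open>The index set can only be infinite through the junk value \<open>Inf {}\<close> taken at the levels
  that are never reached.\<close>
lemma arrivals_until:
  assumes f: "counting_path f" and T: "0 \<le> T"
  defines "S \<equiv> {i. 1 \<le> i \<and> first_passage f i \<le> T}"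
  shows "{1..f T} \<subseteq> S" "finite S \<Longrightarrow> S = {1..f T}"
proof -
  show sub: "{1..f T} \<subseteq> S" using first_passage_le[OF T] unfolding S_def by auto
  assume fin: "finite S"
  have "i \<le> f T" if iS: "i \<in> S" for i
  proof (rule ccontr)
    assume beyond: "\<not> i \<le> f T"
    have i: "1 \<le> i" "first_passage f i \<le> T" using iS unfolding S_def by simp_all
    have never: "{t. 0 \<le> t \<and> i \<le> f t} = {}"
    proof (rule ccontr)
      assume "{t. 0 \<le> t \<and> i \<le> f t} \<noteq> {}"
      then obtain t where t: "0 \<le> t" "i \<le> f t" by blast
      have "f (first_passage f i) = i" "0 < first_passage f i"
        using counting_path_first_passage[OF f t i(1)] by simp_all
      then show False using counting_pathD(2)[OF f, of "first_passage f i" T] i(2) beyond by simp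
    qed
    have "j \<in> S" if "i \<le> j" for j
    proof -
      have "{t. 0 \<le> t \<and> j \<le> f t} = {}" using never that by auto
      then have "first_passage f j = first_passage f i" by (simp only: first_passage_def never)
      then show ?thesis using i that unfolding S_def by simp
    qed
    then have "{i..} \<subseteq> S" by blast
    then show False using fin infinite_Ici finite_subset by blast
  qed
  then show "S = {1..f T}" using sub unfolding S_def by fastforce
qed

lemma cost_path_function_le:
  fixes g :: "nat \<Rightarrow> nat"
  assumes path: "counting_path (\<lambda>t. N t \<omega>)" and T: "0 \<le> T"
    and jumps_nonneg: "\<And>i. i \<in> {1..N T \<omega>} \<Longrightarrow> 0 \<le> F (real (g (i - 1)) - real (g i))"
  shows "cost F N (\<lambda>t \<omega>. g (N t \<omega>)) T \<omega>
    \<le> (\<Sum>i=1..N T \<omega>. F (real (g (i - 1)) - real (g i))) + F (real (g (N T \<omega>)))"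
proof -
  define f where "f t = N t \<omega>" for t
  define S where "S = {i. 1 \<le> i \<and> first_passage f i \<le> T}"
  define jump where "jump i = F (left_lim (\<lambda>t. g (f t)) (first_passage f i)
    - real (g (f (first_passage f i))))" for i
  have jump: "jump i = F (real (g (i - 1)) - real (g i))" if "i \<in> {1..f T}" for i
    using that counting_path_first_passage(2)[OF path[folded f_def] T, of i]
      left_lim_first_passage[OF path[folded f_def] T, of i g]
    unfolding jump_def by simp
  have "sum jump S \<le> sum jump {1..f T}"
  proof (cases "finite S")
    case True
    then show ?thesis using arrivals_until(2)[OF path[folded f_def] T] unfolding S_def by simp
  next
    case False
    have "0 \<le> sum jump {1..f T}"
      using jump jumps_nonneg unfolding f_def by (intro sum_nonneg) auto
    then show ?thesis using False by simp
  qed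
  also have "\<dots> = (\<Sum>i=1..f T. F (real (g (i - 1)) - real (g i)))"
    using jump by (rule sum.cong[OF refl])
  finally show ?thesis
    unfolding cost_def arrival_time_eq_first_passage f_def[symmetric] S_def[symmetric]
      jump_def[symmetric] by simp
qed

lemma measurable_natural_filtration:
  assumes "0 \<le> s" "s \<le> t"
  shows "N s \<in> measurable (natural_filtration M N t) (count_space UNIV)"
proof (rule measurableI)
  fix A :: "nat set"
  have "N s -` A \<inter> space M \<in> {N s -` A \<inter> space M | s A. 0 \<le> s \<and> s \<le> t}"
    using assms by blast
  then show "N s -` A \<inter> space (natural_filtration M N t) \<in> sets (natural_filtration M N t)"
    unfolding natural_filtration_def by (auto simp: sets_measure_of space_measure_of_conv)
qed simp

lemma path_function_admissible:
  fixes g :: "nat \<Rightarrow> nat"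
  assumes paths: "\<And>\<omega>. \<omega> \<in> space M \<Longrightarrow> counting_path (\<lambda>t. N t \<omega>)"
    and g: "antimono g" "g 0 = k"
  shows "(\<lambda>t \<omega>. g (N t \<omega>)) \<in> admissible M N k"
  unfolding admissible_def
proof (intro CollectI conjI allI impI ballI)
  fix t :: real assume "0 \<le> t"
  then have "N t \<in> measurable (natural_filtration M N t) (count_space UNIV)"
    by (intro measurable_natural_filtration) simp_all
  then show "(\<lambda>\<omega>. g (N t \<omega>)) \<in> measurable (natural_filtration M N t) (count_space UNIV)"
    by (rule measurable_compose) simp
next
  fix \<omega> and s t :: real assume "\<omega> \<in> space M"
  then have path: "counting_path (\<lambda>t. N t \<omega>)" by (rule paths)
  then show "g (N 0 \<omega>) = k" using g(2) unfolding counting_path_def by simp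
  assume "0 \<le> s \<and> s \<le> t"
  then have "N s \<omega> \<le> N t \<omega>" using path unfolding counting_path_def by blast
  then show "g (N t \<omega>) \<le> g (N s \<omega>)" by (rule antimonoD[OF g(1)])
next
  fix \<omega> and s t :: real assume "0 \<le> s \<and> s \<le> t \<and> N s \<omega> = N t \<omega>"
  then show "g (N s \<omega>) = g (N t \<omega>)" by simp
qed

lemma nn_integral_min_count:
  fixes X :: "'a \<Rightarrow> nat" and h :: "nat \<Rightarrow> real"
  assumes M: "finite_measure M" and X: "X \<in> measurable M (count_space UNIV)"
    and h_nonneg: "\<And>n. n \<le> q \<Longrightarrow> 0 \<le> h n"
  shows "(\<integral>\<^sup>+\<omega>. ennreal (h (min (X \<omega>) q)) \<partial>M)
    = ennreal (h q * measure M {\<omega>\<in>space M. q \<le> X \<omega>}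
        + (\<Sum>n<q. h n * measure M {\<omega>\<in>space M. X \<omega> = n}))"
proof -
  interpret finite_measure M by (rule M)
  note X [measurable]
  define A where "A n = {\<omega>\<in>space M. X \<omega> = n}" for n
  define B where "B = {\<omega>\<in>space M. q \<le> X \<omega>}"
  have A_sets [measurable]: "A n \<in> sets M" for n unfolding A_def by measurable
  have B_sets [measurable]: "B \<in> sets M" unfolding B_def by measurable
  have split: "ennreal (h (min (X \<omega>) q))
      = (\<Sum>n<q. ennreal (h n) * indicator (A n) \<omega>) + ennreal (h q) * indicator B \<omega>"
    if "\<omega> \<in> space M" for \<omega>
  proof -
    have "(\<Sum>n<q. ennreal (h n) * indicator (A n) \<omega>) = (\<Sum>n<q. if n = X \<omega> then ennreal (h n) else 0)"
      by (rule sum.cong) (auto simp: indicator_def A_def that)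
    then show ?thesis using that by (simp add: B_def indicator_def min_def)
  qed
  have "(\<integral>\<^sup>+\<omega>. ennreal (h (min (X \<omega>) q)) \<partial>M)
      = (\<integral>\<^sup>+\<omega>. (\<Sum>n<q. ennreal (h n) * indicator (A n) \<omega>) + ennreal (h q) * indicator B \<omega> \<partial>M)"
    by (rule nn_integral_cong) (rule split)
  also have "\<dots> = (\<integral>\<^sup>+\<omega>. (\<Sum>n<q. ennreal (h n) * indicator (A n) \<omega>) \<partial>M)
      + (\<integral>\<^sup>+\<omega>. ennreal (h q) * indicator B \<omega> \<partial>M)"
    by (rule nn_integral_add) measurable
  also have "\<dots> = (\<Sum>n<q. ennreal (h n) * emeasure M (A n)) + ennreal (h q) * emeasure M B"
    by (subst nn_integral_sum) (simp_all only: nn_integral_cmult_indicator A_sets B_sets, measurable)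
  also have "(\<Sum>n<q. ennreal (h n) * emeasure M (A n)) = ennreal (\<Sum>n<q. h n * measure M (A n))"
    by (subst sum_ennreal[symmetric]) (auto simp: emeasure_eq_measure ennreal_mult h_nonneg)
  also have "ennreal (h q) * emeasure M B = ennreal (h q * measure M B)"
    by (simp add: emeasure_eq_measure ennreal_mult h_nonneg)
  also have "ennreal (\<Sum>n<q. h n * measure M (A n)) + ennreal (h q * measure M B)
      = ennreal (h q * measure M B + (\<Sum>n<q. h n * measure M (A n)))"
    by (subst add.commute, rule ennreal_plus[symmetric]) (auto intro!: sum_nonneg mult_nonneg_nonneg h_nonneg)
  finally show ?thesis unfolding A_def B_def .
qed

lemma sum_if_le_const:
  "(\<Sum>i=1..n. if i \<le> q then a else 0) = of_nat (min n q) * (a :: 'b :: semiring_1)"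
  by (induction n) (auto simp: algebra_simps min_def not_less_eq_eq dest: le_antisym)

lemma value_fn_le_sell_per_arrival:
  fixes c q k :: nat
  assumes N: "poisson_process M lam N" and F0: "F 0 = 0" and F_nonneg: "\<forall>x\<ge>0. 0 \<le> F x"
    and cq: "c * q \<le> k" and T: "0 \<le> T"
  shows "value_fn M F N k T \<le> ennreal (
      (real q * F (real c) + F (real k - real c * real q)) * measure M {\<omega>\<in>space M. N T \<omega> \<ge> q}
      + (\<Sum>n<q. (real n * F (real c) + F (real k - real n * real c))
          * measure M {\<omega>\<in>space M. N T \<omega> = n}))"
proof -
  define g where "g n = k - c * min n q" for n
  define h where "h n = real n * F (real c) + F (real k - real n * real c)" for n
  have g_real: "real (g n) = real k - real c * real (min n q)" for n
  proof -
    have "c * min n q \<le> k" using cq by (meson le_trans min.cobounded2 mult_le_mono2)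
    then show ?thesis unfolding g_def by (simp add: of_nat_diff)
  qed
  have g_jump: "F (real (g (i - 1)) - real (g i)) = (if i \<le> q then F (real c) else 0)"
    if "1 \<le> i" for i
  proof -
    have "real (g (i - 1)) - real (g i) = real c * (real (min i q) - real (min (i - 1) q))"
      by (simp add: g_real algebra_simps)
    also have "real (min i q) - real (min (i - 1) q) = (if i \<le> q then 1 else 0)"
      using that by (cases "i \<le> q") (auto simp: min_def of_nat_diff)
    finally show ?thesis using F0 by simp
  qed
  have jumps_nonneg: "0 \<le> F (real (g (i - 1)) - real (g i))" if "1 \<le> i" for i
    unfolding g_jump[OF that] using F_nonneg by simp
  have h_nonneg: "0 \<le> h n" if "n \<le> q" for n
  proof -
    have "n * c \<le> k" using cq that by (metis le_trans mult.commute mult_le_mono2)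
    then have "real n * real c \<le> real k" by (metis of_nat_le_iff of_nat_mult)
    then show ?thesis unfolding h_def using F_nonneg by simp
  qed
  have cost: "cost F N (\<lambda>t \<omega>. g (N t \<omega>)) T \<omega> \<le> h (min (N T \<omega>) q)" if "\<omega> \<in> space M" for \<omega>
  proof -
    have "cost F N (\<lambda>t \<omega>. g (N t \<omega>)) T \<omega>
        \<le> (\<Sum>i=1..N T \<omega>. F (real (g (i - 1)) - real (g i))) + F (real (g (N T \<omega>)))"
      using poisson_process_counting_path[OF N that] T
    proof (rule cost_path_function_le)
      fix i assume "i \<in> {1..N T \<omega>}"
      then show "0 \<le> F (real (g (i - 1)) - real (g i))" by (intro jumps_nonneg) simp
    qed
    also have "(\<Sum>i=1..N T \<omega>. F (real (g (i - 1)) - real (g i)))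
        = (\<Sum>i=1..N T \<omega>. if i \<le> q then F (real c) else 0)"
      by (rule sum.cong[OF refl], rule g_jump) simp
    finally show ?thesis unfolding sum_if_le_const h_def g_real by (simp add: mult.commute)
  qed
  have admissible: "(\<lambda>t \<omega>. g (N t \<omega>)) \<in> admissible M N k"
    by (rule path_function_admissible[OF poisson_process_counting_path[OF N]])
      (auto simp: g_def antimono_def intro!: diff_le_mono2 mult_le_mono2 min.mono)
  have "value_fn M F N k T \<le> (\<integral>\<^sup>+\<omega>. ennreal (cost F N (\<lambda>t \<omega>. g (N t \<omega>)) T \<omega>) \<partial>M)"
    unfolding value_fn_def using admissible by (rule INF_lower)
  also have "\<dots> \<le> (\<integral>\<^sup>+\<omega>. ennreal (h (min (N T \<omega>) q)) \<partial>M)"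
    by (rule nn_integral_mono) (simp add: cost ennreal_leI)
  also have "\<dots> = ennreal (h q * measure M {\<omega>\<in>space M. q \<le> N T \<omega>}
      + (\<Sum>n<q. h n * measure M {\<omega>\<in>space M. N T \<omega> = n}))"
  proof (rule nn_integral_min_count)
    show "finite_measure M" using N unfolding poisson_process_def by (simp add: prob_space.finite_measure)
    show "N T \<in> measurable M (count_space UNIV)" using N T unfolding poisson_process_def by simp
  qed (rule h_nonneg)
  finally show ?thesis unfolding h_def by (simp add: mult.commute)
qed

theorem lemma2p2:
  fixes M :: "'a measure" and lam :: real and N :: "real \<Rightarrow> 'a \<Rightarrow> nat"
    and F :: "real \<Rightarrow> real" and k :: nat and T :: real
  assumes "lam > 0" and "poisson_process M lam N"
    and "strict_mono_on {0..} F" and "strictly_convex_on {0..} F" and "F 0 = 0"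
    and "\<forall>x\<ge>0. F x \<ge> 0"
    and "k \<ge> 1" and "T \<ge> 0"
  shows "\<forall>c::nat. c \<ge> 1 \<longrightarrow>
    (let q = nat \<lfloor>real k / real c\<rfloor> in
      value_fn M F N k T \<le> ennreal (
        (real q * F (real c) + F (real k - real c * real q))
          * measure M {\<omega>\<in>space M. N T \<omega> \<ge> q}
        + (\<Sum>n<q. (real n * F (real c) + F (real k - real n * real c))
          * measure M {\<omega>\<in>space M. N T \<omega> = n})))"
proof (intro allI impI)
  fix c :: nat
  have q: "nat \<lfloor>real k / real c\<rfloor> = k div c" by (simp add: floor_divide_of_nat_eq)
  have "c * (k div c) \<le> k" by (rule times_div_less_eq_dividend)
  from value_fn_le_sell_per_arrival[OF assms(2) assms(5) assms(6) this assms(8)]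
  show "let q = nat \<lfloor>real k / real c\<rfloor> in
      value_fn M F N k T \<le> ennreal (
        (real q * F (real c) + F (real k - real c * real q))
          * measure M {\<omega>\<in>space M. N T \<omega> \<ge> q}
        + (\<Sum>n<q. (real n * F (real c) + F (real k - real n * real c))
          * measure M {\<omega>\<in>space M. N T \<omega> = n}))"
    unfolding Let_def q .
qed

end
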